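(* Let $A$ be a lattice generated by a finite set $X$ of join prime elements and satisfying Whitman's condition (W), let $B$ be a lattice with finite generating set $Y$, and let $g\colon A\to D$, $h\colon B\to D$ be epimorphisms onto a lattice $D$. Let $C=\{(a,b)\in A\times B: g(a)=h(b)\}$. Then for each finite subset $Z\subseteq C$ there exists $N\in\mathbb N$ such that for all $(a,b)$ in the sublattice $\langle Z\rangle$ generated by $Z$, all $k\in\mathbb N$ and all $w\in H_{X,k}$: if $a\ge w$ then $b\ge\beta_{h,k+N}(g(w))$ (where $\beta_{h,j}$ is computed with respect to $Y$).
   Context: Whitman's condition (W): for all finite $S,T$, if $\bigwedge S\le\bigvee T$ then some $s\in S$ has $s\le\bigvee T$ or some $t\in T$ has $\bigwedge S\le t$. An element $p$ is join prime if $p\le x\vee y$ implies $p\le x$ or $p\le y$. For a lattice with finite generating set $X$ and a subset $W$, let $W^\wedge:=\{\bigwedge U: U\subseteq W\text{ finite}\}$, $W^\vee:=\{\bigvee U: U\subseteq W\text{ finite}\}$ with conventions $\bigwedge\emptyset:=\bigvee X$, $\bigvee\emptyset:=\bigwedge X$; $G_{X,0}:=X$, $H_{X,k}:=G_{X,k}^\wedge$, $G_{X,k+1}:=H_{X,k}^\vee$. For the epimorphism $h\colon B\to D$ and $d\in D$: $\beta_{h,k}(d):=\bigwedge\{w\in H_{Y,k}: h(w)\ge d\}$. *)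

theory Defs
  imports Main "HOL-Library.Product_Order"
begin

inductive_set lgen :: "'a::lattice set \<Rightarrow> 'a set" for S :: "'a set" where
  lgen_base: "x \<in> S \<Longrightarrow> x \<in> lgen S"
| lgen_sup: "x \<in> lgen S \<Longrightarrow> y \<in> lgen S \<Longrightarrow> sup x y \<in> lgen S"
| lgen_inf: "x \<in> lgen S \<Longrightarrow> y \<in> lgen S \<Longrightarrow> inf x y \<in> lgen S"

definition lattice_hom :: "('a::lattice \<Rightarrow> 'b::lattice) \<Rightarrow> bool" where
  "lattice_hom f \<longleftrightarrow> (\<forall>x y. f (sup x y) = sup (f x) (f y) \<and> f (inf x y) = inf (f x) (f y))"

definition lattice_epi :: "('a::lattice \<Rightarrow> 'b::lattice) \<Rightarrow> bool" where
  "lattice_epi f \<longleftrightarrow> lattice_hom f \<and> surj f"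

definition join_prime :: "'a::lattice \<Rightarrow> bool" where
  "join_prime p \<longleftrightarrow> (\<forall>x y. p \<le> sup x y \<longrightarrow> p \<le> x \<or> p \<le> y)"

definition whitman :: "'a::lattice itself \<Rightarrow> bool" where
  "whitman _ \<longleftrightarrow> (\<forall>S T :: 'a set. finite S \<and> S \<noteq> {} \<and> finite T \<and> T \<noteq> {} \<longrightarrow>
     Inf_fin S \<le> Sup_fin T \<longrightarrow> (\<exists>s\<in>S. s \<le> Sup_fin T) \<or> (\<exists>t\<in>T. Inf_fin S \<le> t))"

text \<open>Finite meets/joins with the conventions: empty meet = join of X, empty join = meet of X.\<close>
definition meetX :: "'a::lattice set \<Rightarrow> 'a set \<Rightarrow> 'a" where
  "meetX X U = (if U = {} then Sup_fin X else Inf_fin U)"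

definition joinX :: "'a::lattice set \<Rightarrow> 'a set \<Rightarrow> 'a" where
  "joinX X U = (if U = {} then Inf_fin X else Sup_fin U)"

definition meets :: "'a::lattice set \<Rightarrow> 'a set \<Rightarrow> 'a set" where
  "meets X W = {meetX X U | U. U \<subseteq> W \<and> finite U}"

definition joins :: "'a::lattice set \<Rightarrow> 'a set \<Rightarrow> 'a set" where
  "joins X W = {joinX X U | U. U \<subseteq> W \<and> finite U}"

primrec G :: "'a::lattice set \<Rightarrow> nat \<Rightarrow> 'a set" where
  "G X 0 = X"
| "G X (Suc k) = joins X (meets X (G X k))"

definition H :: "'a::lattice set \<Rightarrow> nat \<Rightarrow> 'a set" where
  "H X k = meets X (G X k)"

definition beta :: "('b::lattice \<Rightarrow> 'd::lattice) \<Rightarrow> 'b set \<Rightarrow> nat \<Rightarrow> 'd \<Rightarrow> 'b" where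
  "beta h Y k d = meetX Y {w \<in> H Y k. d \<le> h w}"

end

theory Submission
  imports Defs
begin

text \<open>
  Given \<open>Z\<close>, choose \<open>N\<close> with all second coordinates of \<open>Z\<close> in \<open>H\<^sub>Y\<^sub>,\<^sub>N\<close>. By induction over
  the generation of \<open>\<langle>Z\<rangle>\<close>, every \<open>(a, b) \<in> \<langle>Z\<rangle>\<close> is tracked: whenever a nonempty meet \<open>w\<close> of
  \<open>G\<^sub>X\<^sub>,\<^sub>k\<close> lies below \<open>a\<close>, there is \<open>t \<in> H\<^sub>Y\<^sub>,\<^sub>k\<^sub>+\<^sub>N\<close> with \<open>g w \<le> h t\<close> and \<open>t \<le> b\<close>.
  For meets one meets the witnesses. For a join \<open>a\<^sub>1 \<squnion> a\<^sub>2\<close>, Whitman's condition replaces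
  \<open>w \<le> a\<^sub>1 \<squnion> a\<^sub>2\<close> by \<open>w \<le> a\<^sub>i\<close> or by \<open>u \<le> a\<^sub>1 \<squnion> a\<^sub>2\<close> for one of the generators \<open>u \<in> G\<^sub>X\<^sub>,\<^sub>k\<close>
  of \<open>w\<close>. For \<open>k = 0\<close>, \<open>u\<close> is join prime; for \<open>k > 0\<close>, \<open>u\<close> is a join of nonempty meets of
  \<open>G\<^sub>X\<^sub>,\<^sub>k\<^sub>-\<^sub>1\<close>, which are handled by induction on \<open>k\<close>, and joining their witnesses costs
  exactly one level of \<open>H\<^sub>Y\<close>. The theorem follows with \<open>N + 1\<close>, since the empty meet
  \<open>\<Squnion>X\<close> in \<open>H\<^sub>X\<^sub>,\<^sub>k\<close> is a nonempty meet of \<open>G\<^sub>X\<^sub>,\<^sub>k\<^sub>+\<^sub>1\<close>.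
\<close>

definition ne_meets :: "'a::lattice set \<Rightarrow> 'a set" where
  "ne_meets W = {Inf_fin U | U. U \<subseteq> W \<and> finite U \<and> U \<noteq> {}}"

definition ne_joins :: "'a::lattice set \<Rightarrow> 'a set" where
  "ne_joins W = {Sup_fin U | U. U \<subseteq> W \<and> finite U \<and> U \<noteq> {}}"

lemma subset_meets: "W \<subseteq> meets X W"
proof
  fix x assume "x \<in> W"
  then have "meetX X {x} \<in> meets X W" unfolding meets_def by blast
  then show "x \<in> meets X W" by (simp add: meetX_def)
qed

lemma subset_joins: "W \<subseteq> joins X W"
proof
  fix x assume "x \<in> W"
  then have "joinX X {x} \<in> joins X W" unfolding joins_def by blast
  then show "x \<in> joins X W" by (simp add: joinX_def)
qed

lemma meets_mono: "W \<subseteq> W' \<Longrightarrow> meets X W \<subseteq> meets X W'"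
  unfolding meets_def by blast

lemma finite_meets: "finite W \<Longrightarrow> finite (meets X W)"
  by (rule finite_subset[of _ "meetX X ` Pow W"]) (auto simp: meets_def)

lemma finite_joins: "finite W \<Longrightarrow> finite (joins X W)"
  by (rule finite_subset[of _ "joinX X ` Pow W"]) (auto simp: joins_def)

lemma G_subset_G_Suc: "G X k \<subseteq> G X (Suc k)"
  using subset_meets[of "G X k" X] subset_joins[of "meets X (G X k)" X] by auto

lemma G_mono: "k \<le> m \<Longrightarrow> G X k \<subseteq> G X m"
  using lift_Suc_mono_le[of "G X", OF G_subset_G_Suc] .

lemma generators_subset_G: "X \<subseteq> G X k"
  using G_mono[of 0 k X] by simp

lemma G_subset_H: "G X k \<subseteq> H X k"
  by (simp add: H_def subset_meets)

lemma H_mono: "k \<le> m \<Longrightarrow> H X k \<subseteq> H X m"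
  unfolding H_def by (intro meets_mono G_mono)

lemma finite_G: "finite X \<Longrightarrow> finite (G X k)"
  by (induction k) (auto intro: finite_meets finite_joins)

lemma finite_H: "finite X \<Longrightarrow> finite (H X k)"
  unfolding H_def by (intro finite_meets finite_G)

lemma subset_ne_meets: "W \<subseteq> ne_meets W"
proof
  fix x assume "x \<in> W"
  then have "Inf_fin {x} \<in> ne_meets W" unfolding ne_meets_def by blast
  then show "x \<in> ne_meets W" by simp
qed

lemma subset_ne_joins: "W \<subseteq> ne_joins W"
proof
  fix x assume "x \<in> W"
  then have "Sup_fin {x} \<in> ne_joins W" unfolding ne_joins_def by blast
  then show "x \<in> ne_joins W" by simp
qed

lemma Sup_fin_in_ne_joins:
  assumes "finite V" "V \<noteq> {}" "V \<subseteq> ne_joins W"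
  shows "Sup_fin V \<in> ne_joins W"
  using assms
proof (induction V rule: finite_ne_induct)
  case (singleton x)
  then show ?case by simp
next
  case (insert x F)
  obtain R where R: "x = Sup_fin R" "R \<subseteq> W" "finite R" "R \<noteq> {}"
    using insert.prems unfolding ne_joins_def by blast
  obtain R' where R': "Sup_fin F = Sup_fin R'" "R' \<subseteq> W" "finite R'" "R' \<noteq> {}"
    using insert.IH insert.prems unfolding ne_joins_def by blast
  have "Sup_fin (insert x F) = Sup_fin (R \<union> R')"
    using insert.hyps R R' by (simp add: Sup_fin.union)
  with R R' show ?case unfolding ne_joins_def by blast
qed

lemma H_subset_ne_joins_ne_meets:
  assumes "X \<noteq> {}" "finite X"
  shows "H X k \<subseteq> ne_joins (ne_meets (G X k))"
proof
  fix v assume "v \<in> H X k"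
  then obtain U where U: "v = meetX X U" "U \<subseteq> G X k" "finite U"
    unfolding H_def meets_def by blast
  show "v \<in> ne_joins (ne_meets (G X k))"
  proof (cases "U = {}")
    case True
    have "X \<subseteq> ne_meets (G X k)"
      using generators_subset_G subset_ne_meets by blast
    with True U assms show ?thesis unfolding ne_joins_def meetX_def by auto
  next
    case False
    with U have "v \<in> ne_meets (G X k)" unfolding ne_meets_def meetX_def by auto
    then show ?thesis using subset_ne_joins by blast
  qed
qed

lemma G_Suc_subset_ne_joins_ne_meets:
  assumes "X \<noteq> {}" "finite X"
  shows "G X (Suc k) \<subseteq> ne_joins (ne_meets (G X k))"
proof
  fix u assume "u \<in> G X (Suc k)"
  then obtain V where V: "u = joinX X V" "V \<subseteq> H X k" "finite V"
    by (auto simp: joins_def H_def)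
  show "u \<in> ne_joins (ne_meets (G X k))"
  proof (cases "V = {}")
    case True
    then have "u = Inf_fin X" using V by (simp add: joinX_def)
    then have "u \<in> ne_meets (G X k)"
      using assms generators_subset_G[of X k] unfolding ne_meets_def by blast
    then show ?thesis using subset_ne_joins by blast
  next
    case False
    with V show ?thesis
      using Sup_fin_in_ne_joins H_subset_ne_joins_ne_meets[OF assms]
      unfolding joinX_def by (metis subset_trans)
  qed
qed

lemma H_subset_ne_meets_G_Suc:
  assumes "X \<noteq> {}" "finite X"
  shows "H X k \<subseteq> ne_meets (G X (Suc k))"
proof
  fix v assume "v \<in> H X k"
  then obtain U where U: "v = meetX X U" "U \<subseteq> G X k" "finite U"
    unfolding H_def meets_def by blast
  show "v \<in> ne_meets (G X (Suc k))"
  proof (cases "U = {}")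
    case True
    have "X \<subseteq> meets X (G X k)"
      using generators_subset_G subset_meets by blast
    with assms have "joinX X X \<in> G X (Suc k)" unfolding G.simps joins_def by blast
    with True U assms show ?thesis
      using subset_ne_meets unfolding meetX_def joinX_def by auto
  next
    case False
    moreover have "U \<subseteq> G X (Suc k)" using U(2) G_subset_G_Suc by blast
    ultimately show ?thesis using U unfolding ne_meets_def meetX_def by auto
  qed
qed

lemma lgen_empty [simp]: "lgen {} = {}"
proof -
  have "x \<in> lgen S \<Longrightarrow> S \<noteq> {}" for x and S :: "'a::lattice set"
    by (induction rule: lgen.induct) auto
  then show ?thesis by blast
qed

lemma le_Sup_fin_generators:
  assumes "finite Y" "lgen Y = UNIV"
  shows "z \<le> Sup_fin Y"
proof -
  have "z \<in> lgen Y" using assms(2) by simp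
  then show ?thesis
    by induction (auto intro: Sup_fin.coboundedI[OF assms(1)] le_infI1)
qed

lemma inf_in_H:
  assumes "finite Y" "lgen Y = UNIV" "t1 \<in> H Y j" "t2 \<in> H Y j"
  shows "inf t1 t2 \<in> H Y j"
proof -
  obtain U1 U2 where U: "t1 = meetX Y U1" "t2 = meetX Y U2"
    "U1 \<subseteq> G Y j" "U2 \<subseteq> G Y j" "finite U1" "finite U2"
    using assms(3,4) by (auto simp: H_def meets_def)
  have "meetX Y (U1 \<union> U2) = inf t1 t2"
    using U le_Sup_fin_generators[OF assms(1,2)]
    by (auto simp: meetX_def Inf_fin.union inf_absorb1 inf_absorb2)
  moreover have "meetX Y (U1 \<union> U2) \<in> H Y j"
    unfolding H_def meets_def using U by blast
  ultimately show ?thesis by simp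
qed

lemma lgen_imp_in_G: "x \<in> lgen Y \<Longrightarrow> \<exists>m. x \<in> G Y m"
proof (induction rule: lgen.induct)
  case (lgen_base x)
  then show ?case by (metis G.simps(1))
next
  case (lgen_sup x y)
  then obtain m where "x \<in> G Y m" "y \<in> G Y m"
    by (metis G_mono max.cobounded1 max.cobounded2 subsetD)
  then have "{x, y} \<subseteq> meets Y (G Y m)" using subset_meets by blast
  then have "joinX Y {x, y} \<in> G Y (Suc m)" unfolding G.simps joins_def by blast
  then have "sup x y \<in> G Y (Suc m)" by (simp add: joinX_def)
  then show ?case ..
next
  case (lgen_inf x y)
  then obtain m where "x \<in> G Y m" "y \<in> G Y m"
    by (metis G_mono max.cobounded1 max.cobounded2 subsetD)
  then have "meetX Y {x, y} \<in> meets Y (G Y m)" unfolding meets_def by blast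
  then have "meetX Y {x, y} \<in> G Y (Suc m)" using subset_joins by auto
  then have "inf x y \<in> G Y (Suc m)" by (simp add: meetX_def)
  then show ?case ..
qed

lemma finite_subset_H:
  assumes "lgen Y = UNIV" "finite B"
  shows "\<exists>N. B \<subseteq> H Y N"
  using assms(2)
proof (induction rule: finite_induct)
  case empty
  then show ?case by simp
next
  case (insert b B)
  then obtain N where "B \<subseteq> H Y N" by blast
  moreover obtain m where "b \<in> H Y m"
    using lgen_imp_in_G[of b Y] assms(1) G_subset_H by blast
  ultimately have "insert b B \<subseteq> H Y (max N m)"
    using H_mono[of N "max N m" Y] H_mono[of m "max N m" Y] by auto
  then show ?case by blast
qed

lemma lattice_hom_mono: "lattice_hom f \<Longrightarrow> x \<le> y \<Longrightarrow> f x \<le> f y"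
  unfolding lattice_hom_def by (metis le_iff_inf)

lemma lattice_hom_Sup_fin:
  assumes "lattice_hom f" "finite V" "V \<noteq> {}"
  shows "f (Sup_fin V) = Sup_fin (f ` V)"
  using assms(2,3) by (induction rule: finite_ne_induct) (use assms(1) in \<open>auto simp: lattice_hom_def\<close>)

lemma whitman_Inf_fin_le_sup:
  assumes "whitman TYPE('a::lattice)" "finite U" "U \<noteq> {}" "Inf_fin U \<le> sup a1 a2"
  shows "Inf_fin U \<le> a1 \<or> Inf_fin U \<le> a2 \<or> (\<exists>u \<in> U. u \<le> sup (a1::'a) a2)"
proof -
  have "Inf_fin U \<le> Sup_fin {a1, a2}" using assms(4) by simp
  then have "(\<exists>s \<in> U. s \<le> Sup_fin {a1, a2}) \<or> (\<exists>t \<in> {a1, a2}. Inf_fin U \<le> t)"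
    using assms(1)[unfolded whitman_def, rule_format, of U "{a1, a2}"] assms(2,3) by simp
  then show ?thesis by auto
qed

definition has_H_witness :: "('b::lattice \<Rightarrow> 'd::lattice) \<Rightarrow> 'b set \<Rightarrow> nat \<Rightarrow> 'd \<Rightarrow> 'b \<Rightarrow> bool" where
  "has_H_witness h Y m d b \<longleftrightarrow> (\<exists>t \<in> H Y m. d \<le> h t \<and> t \<le> b)"

lemma has_H_witness_mono:
  assumes "has_H_witness h Y m d b" "d' \<le> d" "m \<le> m'" "b \<le> b'"
  shows "has_H_witness h Y m' d' b'"
  using assms H_mono unfolding has_H_witness_def by (blast intro: order_trans)

lemma has_H_witness_inf:
  assumes "lattice_hom h" "finite Y" "lgen Y = UNIV"
    and "has_H_witness h Y m d b1" "has_H_witness h Y m d b2"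
  shows "has_H_witness h Y m d (inf b1 b2)"
proof -
  obtain t1 t2 where t: "t1 \<in> H Y m" "d \<le> h t1" "t1 \<le> b1" "t2 \<in> H Y m" "d \<le> h t2" "t2 \<le> b2"
    using assms(4,5) unfolding has_H_witness_def by blast
  have "inf t1 t2 \<in> H Y m" using inf_in_H[OF assms(2,3)] t by blast
  moreover have "d \<le> h (inf t1 t2)" using assms(1) t by (simp add: lattice_hom_def)
  moreover have "inf t1 t2 \<le> inf b1 b2" using t by (auto intro: le_infI1 le_infI2)
  ultimately show ?thesis unfolding has_H_witness_def by blast
qed

text \<open>Joining the witnesses costs one level, since \<open>G Y (Suc m)\<close> consists of joins of \<open>H Y m\<close>.\<close>
lemma has_H_witness_Sup_fin:
  assumes "lattice_hom h" "finite D" "D \<noteq> {}" "\<forall>d \<in> D. has_H_witness h Y m d b"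
  shows "has_H_witness h Y (Suc m) (Sup_fin D) b"
proof -
  obtain \<tau> where \<tau>: "\<forall>d \<in> D. \<tau> d \<in> H Y m \<and> d \<le> h (\<tau> d) \<and> \<tau> d \<le> b"
    using assms(4) unfolding has_H_witness_def by metis
  define s where "s = Sup_fin (\<tau> ` D)"
  have "s = joinX Y (\<tau> ` D)" using assms(3) by (simp add: s_def joinX_def)
  moreover have "\<tau> ` D \<subseteq> meets Y (G Y m)" using \<tau> by (auto simp: H_def)
  ultimately have "s \<in> G Y (Suc m)"
    using assms(2) unfolding G.simps joins_def by blast
  then have "s \<in> H Y (Suc m)" using G_subset_H by blast
  moreover have "Sup_fin D \<le> h s"
  proof (rule Sup_fin.boundedI[OF assms(2,3)])
    fix d assume "d \<in> D"
    then have "\<tau> d \<le> s" unfolding s_def using assms(2) by (simp add: Sup_fin.coboundedI)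
    then show "d \<le> h s"
      using \<tau> \<open>d \<in> D\<close> lattice_hom_mono[OF assms(1)] by (blast intro: order_trans)
  qed
  moreover have "s \<le> b"
    unfolding s_def using assms(2,3) \<tau> by (simp add: Sup_fin.bounded_iff)
  ultimately show ?thesis unfolding has_H_witness_def by blast
qed

lemma beta_le_if_has_H_witness:
  assumes "finite Y" "has_H_witness h Y m d b"
  shows "beta h Y m d \<le> b"
proof -
  obtain t where t: "t \<in> H Y m" "d \<le> h t" "t \<le> b"
    using assms(2) unfolding has_H_witness_def by blast
  let ?S = "{w \<in> H Y m. d \<le> h w}"
  have "t \<in> ?S" using t by simp
  moreover have "finite ?S" using finite_H[OF assms(1)] by simp
  ultimately have "beta h Y m d \<le> t"
    unfolding beta_def meetX_def by (auto intro: Inf_fin.coboundedI)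
  with t show ?thesis by simp
qed

definition tracked ::
    "'a::lattice set \<Rightarrow> ('a \<Rightarrow> 'd::lattice) \<Rightarrow> ('b::lattice \<Rightarrow> 'd) \<Rightarrow> 'b set \<Rightarrow> nat \<Rightarrow> 'a \<Rightarrow> 'b \<Rightarrow> bool"
  where "tracked X g h Y N a b \<longleftrightarrow>
    (\<forall>k. \<forall>w \<in> ne_meets (G X k). w \<le> a \<longrightarrow> has_H_witness h Y (k + N) (g w) b)"

lemma tracked_base:
  assumes "lattice_hom g" "g a = h b" "b \<in> H Y N"
  shows "tracked X g h Y N a b"
  unfolding tracked_def
proof (intro allI ballI impI)
  fix k w assume "w \<le> a"
  have "has_H_witness h Y N (g a) b"
    using assms(2,3) unfolding has_H_witness_def by auto
  moreover have "g w \<le> g a" using lattice_hom_mono[OF assms(1) \<open>w \<le> a\<close>] .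
  ultimately show "has_H_witness h Y (k + N) (g w) b"
    by (rule has_H_witness_mono) simp_all
qed

lemma tracked_inf:
  assumes "lattice_hom h" "finite Y" "lgen Y = UNIV"
    and "tracked X g h Y N a1 b1" "tracked X g h Y N a2 b2"
  shows "tracked X g h Y N (inf a1 a2) (inf b1 b2)"
  unfolding tracked_def
proof (intro allI ballI impI)
  fix k w assume "w \<in> ne_meets (G X k)" "w \<le> inf a1 a2"
  then have "has_H_witness h Y (k + N) (g w) b1" "has_H_witness h Y (k + N) (g w) b2"
    using assms(4,5) unfolding tracked_def by simp_all
  then show "has_H_witness h Y (k + N) (g w) (inf b1 b2)"
    by (rule has_H_witness_inf[OF assms(1-3)])
qed

lemma tracked_sup_from_generators:
  assumes "whitman TYPE('a::lattice)" "lattice_hom g"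
    and "tracked X g h Y N a1 b1" "tracked X g h Y N a2 (b2::'b::lattice)"
    and gen: "\<forall>u \<in> G X k. u \<le> sup a1 a2 \<longrightarrow> has_H_witness h Y (k + N) (g u) (sup b1 b2)"
    and "w \<in> ne_meets (G X k)" "w \<le> sup a1 (a2::'a)"
  shows "has_H_witness h Y (k + N) (g w) (sup b1 b2)"
proof -
  obtain U where U: "w = Inf_fin U" "U \<subseteq> G X k" "finite U" "U \<noteq> {}"
    using assms(6) unfolding ne_meets_def by blast
  from whitman_Inf_fin_le_sup[OF assms(1) U(3,4)] assms(7) U(1)
  consider "w \<le> a1" | "w \<le> a2" | u where "u \<in> U" "u \<le> sup a1 a2" by blast
  then show ?thesis
  proof cases
    case 1
    with assms(3,6) have "has_H_witness h Y (k + N) (g w) b1" unfolding tracked_def by blast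
    then show ?thesis by (rule has_H_witness_mono) simp_all
  next
    case 2
    with assms(4,6) have "has_H_witness h Y (k + N) (g w) b2" unfolding tracked_def by blast
    then show ?thesis by (rule has_H_witness_mono) simp_all
  next
    case 3
    then have "has_H_witness h Y (k + N) (g u) (sup b1 b2)" using gen U(2) by blast
    moreover have "g w \<le> g u"
      using lattice_hom_mono[OF assms(2)] U 3(1) by (simp add: Inf_fin.coboundedI)
    ultimately show ?thesis by (rule has_H_witness_mono) simp_all
  qed
qed

lemma tracked_sup_generators:
  assumes "finite X" "X \<noteq> {}" "\<forall>x \<in> X. join_prime x" "whitman TYPE('a::lattice)"
    and "lattice_hom g" "lattice_hom h"
    and "tracked X g h Y N a1 b1" "tracked X g h Y N a2 (b2::'b::lattice)"
  shows "u \<in> G X k \<Longrightarrow> u \<le> sup a1 (a2::'a) \<Longrightarrow> has_H_witness h Y (k + N) (g u) (sup b1 b2)"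
proof (induction k arbitrary: u)
  case 0
  have "u \<in> ne_meets (G X 0)" using 0 subset_ne_meets by blast
  moreover have "u \<le> a1 \<or> u \<le> a2" using 0 assms(3) unfolding join_prime_def by simp
  ultimately have "has_H_witness h Y (0 + N) (g u) b1 \<or> has_H_witness h Y (0 + N) (g u) b2"
    using assms(7,8) unfolding tracked_def by blast
  then show ?case by (auto elim: has_H_witness_mono)
next
  case (Suc j)
  have "u \<in> ne_joins (ne_meets (G X j))"
    using Suc.prems(1) G_Suc_subset_ne_joins_ne_meets[OF assms(2,1)] by blast
  then obtain V where V: "u = Sup_fin V" "V \<subseteq> ne_meets (G X j)" "finite V" "V \<noteq> {}"
    unfolding ne_joins_def by blast
  have "has_H_witness h Y (j + N) (g v) (sup b1 b2)" if "v \<in> V" for v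
  proof (rule tracked_sup_from_generators[OF assms(4,5,7,8)])
    show "v \<in> ne_meets (G X j)" using V that by blast
    have "v \<le> u" using V that by (simp add: Sup_fin.coboundedI)
    then show "v \<le> sup a1 a2" using Suc.prems(2) by (rule order_trans)
  qed (use Suc.IH in blast)
  then have "has_H_witness h Y (Suc (j + N)) (Sup_fin (g ` V)) (sup b1 b2)"
    using has_H_witness_Sup_fin[OF assms(6)] V(3,4) by blast
  then show ?case using lattice_hom_Sup_fin[OF assms(5) V(3,4)] V(1) by simp
qed

lemma tracked_sup:
  assumes "finite X" "X \<noteq> {}" "\<forall>x \<in> X. join_prime x" "whitman TYPE('a::lattice)"
    and "lattice_hom g" "lattice_hom h"
    and "tracked X g h Y N a1 b1" "tracked X g h Y N a2 (b2::'b::lattice)"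
  shows "tracked X g h Y N (sup a1 (a2::'a)) (sup b1 b2)"
  unfolding tracked_def
proof (intro allI ballI impI)
  fix k w assume "w \<in> ne_meets (G X k)" "w \<le> sup a1 a2"
  then show "has_H_witness h Y (k + N) (g w) (sup b1 b2)"
    using tracked_sup_from_generators[OF assms(4,5,7,8)] tracked_sup_generators[OF assms]
    by blast
qed

lemma tracked_lgen:
  assumes "finite X" "X \<noteq> {}" "\<forall>x \<in> X. join_prime x" "whitman TYPE('a::lattice)"
    and "finite Y" "lgen Y = UNIV" "lattice_hom g" "lattice_hom h"
    and "Z \<subseteq> {(a, b). g a = h b}" "snd ` Z \<subseteq> H Y N"
    and "p \<in> lgen Z"
  shows "tracked X g h Y N (fst p) (snd (p :: 'a \<times> 'b::lattice))"
  using assms(11)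
proof induction
  case (lgen_base p)
  then show ?case using assms(7,9,10) by (cases p) (auto intro!: tracked_base)
next
  case (lgen_sup p q)
  then show ?case using tracked_sup[OF assms(1-4,7,8)] by simp
next
  case (lgen_inf p q)
  then show ?case using tracked_inf[OF assms(8,5,6)] by simp
qed

theorem mainTheorem12:
  fixes X :: "'a::lattice set" and Y :: "'b::lattice set"
    and g :: "'a \<Rightarrow> 'd::lattice" and h :: "'b \<Rightarrow> 'd"
  assumes "finite X" and "lgen X = UNIV" and "\<forall>x\<in>X. join_prime x"
    and "whitman TYPE('a)"
    and "finite Y" and "lgen Y = UNIV"
    and "lattice_epi g" and "lattice_epi h"
  shows "\<forall>Z. finite Z \<and> Z \<subseteq> {(a, b). g a = h b} \<longrightarrow>
           (\<exists>N::nat. \<forall>a b k w. (a, b) \<in> lgen Z \<and> w \<in> H X k \<and> w \<le> a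
              \<longrightarrow> beta h Y (k + N) (g w) \<le> b)"
proof (intro allI impI)
  fix Z :: "('a \<times> 'b) set"
  assume Z: "finite Z \<and> Z \<subseteq> {(a, b). g a = h b}"
  have homs: "lattice_hom g" "lattice_hom h" using assms(7,8) by (simp_all add: lattice_epi_def)
  have "X \<noteq> {}" using assms(2) by auto
  obtain N where N: "snd ` Z \<subseteq> H Y N" using finite_subset_H[OF assms(6)] Z by blast
  show "\<exists>N. \<forall>a b k w. (a, b) \<in> lgen Z \<and> w \<in> H X k \<and> w \<le> a \<longrightarrow> beta h Y (k + N) (g w) \<le> b"
  proof (intro exI[of _ "Suc N"] allI impI)
    fix a b k w assume abw: "(a, b) \<in> lgen Z \<and> w \<in> H X k \<and> w \<le> a"
    then have "tracked X g h Y N a b"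
      using tracked_lgen[OF assms(1) \<open>X \<noteq> {}\<close> assms(3-6) homs _ N, of "(a, b)"] Z by simp
    moreover have "w \<in> ne_meets (G X (Suc k))"
      using abw H_subset_ne_meets_G_Suc[OF \<open>X \<noteq> {}\<close> assms(1)] by blast
    ultimately have "has_H_witness h Y (Suc k + N) (g w) b" using abw unfolding tracked_def by blast
    then show "beta h Y (k + Suc N) (g w) \<le> b" using beta_le_if_has_H_witness[OF assms(5)] by simp
  qed
qed

end
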